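(* Let $f=\sum_{k=1}^K\pi_kN(0,u_k^2)$, $s>0$, $y\in\mathbb R$, and define $h_1^{\mathrm{NM}}(\bar b,f,s^2;y)=-\sup\{F_1^{\mathrm{NM}}(q,f,s^2;y):q \text{ with }\mathbb E_q(b)=\bar b\}$. Then for all $\bar b\in\mathbb R$, $$h_1^{\mathrm{NM}}(\bar b,f,s^2;y)=\frac1{2s^2}(y-\bar b)^2+\frac1{s^2}\rho_{f,s}(\bar b),$$ and for every $y\in\mathbb R$, $\rho_{f,s}(S_{f,s}(y))=-s^2\ell_{\mathrm{NM}}(y;f,s^2)-\tfrac12(y-S_{f,s}(y))^2$ and $\rho'_{f,s}(S_{f,s}(y))=y-S_{f,s}(y)=-s^2\ell'_{\mathrm{NM}}(y;f,s^2)$, where $'$ denotes differentiation with respect to the first argument.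
   Context: $\mathrm{NM}_1(f,s^2)$: $y\mid b\sim N(b,s^2)$, latent $\gamma\in\{1,\dots,K\}$ with $P(\gamma=k)=\pi_k$, $b\mid\gamma=k\sim N(0,u_k^2)$ ($N(0,0)=\delta_0$); $p_{\mathrm{prior}}(f)$ is the joint law $\pi_kN(b;0,u_k^2)$ of $(b,\gamma)$. For a distribution $q$ on $(b,\gamma)\in\mathbb R\times\{1,\dots,K\}$, $F_1^{\mathrm{NM}}(q,f,s^2;y)=\mathbb E_q[\log N(y;b,s^2)]-D_{\mathrm{KL}}(q\,\|\,p_{\mathrm{prior}}(f))$. $\ell_{\mathrm{NM}}(y;f,s^2)=\log p(y\mid f,s^2)$ is the marginal log-likelihood and $S_{f,s}(y)=\mathbb E(b\mid y,f,s^2)$ the posterior mean. Penalty: $\rho_{f,s}(\bar b)=\inf_{q:\mathbb E_q(b)=\bar b}\{\tfrac{s^2}2\log(2\pi s^2)+\tfrac12\mathrm{Var}_q(b)+s^2D_{\mathrm{KL}}(q\,\|\,p_{\mathrm{prior}}(f))\}$ over distributions $q$ on $(b,\gamma)$. *)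

theory Defs
  imports "HOL-Probability.Probability"
begin

text \<open>Latent pairs (b, gamma) live in
  real \<times> nat with the product sigma-algebra borel \<otimes> count_space.\<close>

abbreviation latent_space :: "(real \<times> nat) measure" where
  "latent_space \<equiv> borel \<Otimes>\<^sub>M count_space UNIV"

definition comp_law :: "real \<Rightarrow> real measure" where
  "comp_law u = (if u = 0 then return borel 0 else density lborel (normal_density 0 u))"

definition prior :: "nat \<Rightarrow> (nat \<Rightarrow> real) \<Rightarrow> (nat \<Rightarrow> real) \<Rightarrow> (real \<times> nat) measure" where
  "prior K p u = measure_of (space latent_space) (sets latent_space)
     (\<lambda>A. \<Sum>k\<in>{1..K}. ennreal (p k) * emeasure (comp_law (u k)) {b. (b, k) \<in> A})"

text \<open>Extended-real expectation E_M[g] = E[g^+] - E[g^-] (used only where at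
  least one of the two parts is finite).\<close>
definition ereal_expect :: "'a measure \<Rightarrow> ('a \<Rightarrow> real) \<Rightarrow> ereal" where
  "ereal_expect M g =
     enn2ereal (\<integral>\<^sup>+ x. ennreal (g x) \<partial>M) - enn2ereal (\<integral>\<^sup>+ x. ennreal (- g x) \<partial>M)"

definition KL :: "'a measure \<Rightarrow> 'a measure \<Rightarrow> ereal" where
  "KL q p = (if absolutely_continuous p q
             then ereal_expect q (\<lambda>x. ln (enn2real (RN_deriv p q x)))
             else \<infinity>)"

definition latent_dist :: "nat \<Rightarrow> (real \<times> nat) measure \<Rightarrow> bool" where
  "latent_dist K q \<longleftrightarrow> prob_space q \<and> sets q = sets latent_space
     \<and> emeasure q (UNIV \<times> {1..K}) = 1"

definition dists_with_mean :: "nat \<Rightarrow> real \<Rightarrow> (real \<times> nat) measure set" where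
  "dists_with_mean K bbar =
     {q. latent_dist K q \<and> integrable q fst \<and> (\<integral>x. fst x \<partial>q) = bbar}"

definition F1_NM :: "nat \<Rightarrow> (nat \<Rightarrow> real) \<Rightarrow> (nat \<Rightarrow> real) \<Rightarrow> real \<Rightarrow> real
    \<Rightarrow> (real \<times> nat) measure \<Rightarrow> ereal" where
  "F1_NM K p u s y q =
     ereal_expect q (\<lambda>x. ln (normal_density (fst x) s y)) - KL q (prior K p u)"

definition h1_NM :: "nat \<Rightarrow> (nat \<Rightarrow> real) \<Rightarrow> (nat \<Rightarrow> real) \<Rightarrow> real \<Rightarrow> real \<Rightarrow> real \<Rightarrow> ereal" where
  "h1_NM K p u s y bbar = - (SUP q \<in> dists_with_mean K bbar. F1_NM K p u s y q)"

text \<open>Penalty rho_{f,s}(bbar); Var_q(b) = E_q[(b - bbar)^2] since E_q(b) = bbar.\<close>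
definition rho_NM :: "nat \<Rightarrow> (nat \<Rightarrow> real) \<Rightarrow> (nat \<Rightarrow> real) \<Rightarrow> real \<Rightarrow> real \<Rightarrow> ereal" where
  "rho_NM K p u s bbar = (INF q \<in> dists_with_mean K bbar.
      ereal (s\<^sup>2 / 2 * ln (2 * pi * s\<^sup>2))
      + ereal (1/2) * enn2ereal (\<integral>\<^sup>+ x. ennreal ((fst x - bbar)\<^sup>2) \<partial>q)
      + ereal (s\<^sup>2) * KL q (prior K p u))"

definition marg_NM :: "nat \<Rightarrow> (nat \<Rightarrow> real) \<Rightarrow> (nat \<Rightarrow> real) \<Rightarrow> real \<Rightarrow> real \<Rightarrow> real" where
  "marg_NM K p u s y = (\<integral>x. normal_density (fst x) s y \<partial>(prior K p u))"

definition loglik_NM :: "nat \<Rightarrow> (nat \<Rightarrow> real) \<Rightarrow> (nat \<Rightarrow> real) \<Rightarrow> real \<Rightarrow> real \<Rightarrow> real" where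
  "loglik_NM K p u s y = ln (marg_NM K p u s y)"

definition postmean_NM :: "nat \<Rightarrow> (nat \<Rightarrow> real) \<Rightarrow> (nat \<Rightarrow> real) \<Rightarrow> real \<Rightarrow> real \<Rightarrow> real" where
  "postmean_NM K p u s y =
     (\<integral>x. fst x * normal_density (fst x) s y \<partial>(prior K p u)) / marg_NM K p u s y"

end

theory Submission
  imports Defs
begin

text \<open>
  For a law q of (b, gamma) with mean bbar, the bias-variance identity
  E_q (y - b)^2 = (y - bbar)^2 + Var_q b splits -F_1 into (y - bbar)^2 / (2 s^2) plus 1 / s^2
  times the objective defining rho; taking the infimum over q gives the formula for h_1.

  The Gibbs variational principle E_q log g - KL(q || p) <= log E_p g, with equality when q is
  p tilted by g, applied to the likelihood g = N(y; b, s^2) gives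
  rho(bbar) >= -s^2 l(y) - (y - bbar)^2 / 2 for every y, with equality at bbar = S(y), the
  posterior mean. So rho is the upper envelope of a family of parabolas touching it at the points
  S(y); as S is continuous and strictly increasing, rho'(S(y)) = y - S(y).

  The marginal density is the explicit Gaussian mixture sum_k pi_k N(y; 0, s^2 + u_k^2), which
  yields Tweedie's formula S(y) = y + s^2 l'(y). Differentiating once more, S' > 0 follows from
  the Cauchy-Schwarz inequality and from some component having pi_k > 0 and u_k > 0.
\<close>

subsection \<open>Gaussian densities and the function \<open>t ln t\<close>\<close>

lemma ln_normal_density:
  assumes "0 < \<sigma>"
  shows "ln (normal_density \<mu> \<sigma> x) = - (ln (2 * pi * \<sigma>\<^sup>2) / 2) - (x - \<mu>)\<^sup>2 / (2 * \<sigma>\<^sup>2)"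
  using assms by (simp add: normal_density_def ln_mult ln_div ln_sqrt)

lemma normal_density_le: "0 < \<sigma> \<Longrightarrow> normal_density \<mu> \<sigma> x \<le> 1 / sqrt (2 * pi * \<sigma>\<^sup>2)"
  unfolding normal_density_def by (intro mult_left_le) auto

lemma normal_density_has_real_derivative:
  assumes "0 < \<sigma>"
  shows "(normal_density \<mu> \<sigma> has_real_derivative (- (x - \<mu>) / \<sigma>\<^sup>2 * normal_density \<mu> \<sigma> x)) (at x)"
  unfolding normal_density_def[abs_def] using assms
  by (auto intro!: derivative_eq_intros simp: power2_eq_square divide_simps) (simp add: algebra_simps)

lemma normal_density_mult_normal_density:
  assumes s: "0 < s" and u: "0 < u"
  shows "normal_density b s y * normal_density 0 u b =
    normal_density 0 (sqrt (s\<^sup>2 + u\<^sup>2)) y * normal_density (u\<^sup>2 * y / (s\<^sup>2 + u\<^sup>2)) (sqrt (s\<^sup>2 * u\<^sup>2 / (s\<^sup>2 + u\<^sup>2))) b"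
proof -
  define \<sigma>' \<tau>' where "\<sigma>' = s\<^sup>2" and "\<tau>' = u\<^sup>2"
  then have [simp, arith]: "0 < \<sigma>'" "0 < \<tau>'"
    using s u by simp_all
  have sqrt: "sqrt (2 * pi * (\<sigma>' + \<tau>')) * sqrt (2 * pi * (\<sigma>' * \<tau>') / (\<sigma>' + \<tau>')) =
    sqrt (2 * pi * \<sigma>') * sqrt (2 * pi * \<tau>')"
    by (subst power_eq_iff_eq_base[symmetric, where n=2])
       (simp_all add: real_sqrt_mult[symmetric] power2_eq_square)
  show ?thesis
    using s u
    apply (simp add: normal_density_def \<sigma>'_def[symmetric] \<tau>'_def[symmetric] sqrt mult_exp_exp)
    apply (simp add: divide_simps power2_eq_square)
    apply (simp add: algebra_simps)
    done
qed

lemma mult_minus_ln_le_1: "0 < (t::real) \<Longrightarrow> t * - ln t \<le> 1"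
  using ln_le_minus_one[of "1 / t"] by (simp add: ln_div field_simps)

lemma abs_mult_ln_le:
  assumes "0 < (t::real)" "t \<le> c"
  shows "\<bar>t * ln t\<bar> \<le> c * \<bar>ln c\<bar> + 1"
proof (cases "0 \<le> ln t")
  case True
  have "ln t \<le> ln c" using assms by (intro ln_mono) auto
  then have "t * ln t \<le> c * \<bar>ln c\<bar>"
    using assms True by (intro mult_mono) auto
  then show ?thesis using True assms by (simp add: abs_mult)
next
  case False
  have "\<bar>t * ln t\<bar> = t * - ln t" using False assms by (simp add: abs_mult)
  moreover have "0 \<le> c * \<bar>ln c\<bar>" using assms by simp
  ultimately show ?thesis using mult_minus_ln_le_1[OF assms(1)] by linarith
qed

subsection \<open>The mixture prior\<close>

lemma prob_space_comp_law: "prob_space (comp_law u)"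
proof (cases "u = 0")
  case True then show ?thesis by (simp add: comp_law_def prob_space_return)
next
  case False
  have "normal_density 0 u = normal_density 0 \<bar>u\<bar>"
    by (simp add: normal_density_def fun_eq_iff)
  then show ?thesis
    using False prob_space_normal_density[of "\<bar>u\<bar>" 0] by (simp add: comp_law_def)
qed

lemma sets_comp_law[simp, measurable_cong]: "sets (comp_law u) = sets borel"
  by (simp add: comp_law_def)

definition mixing_law :: "nat \<Rightarrow> (nat \<Rightarrow> real) \<Rightarrow> nat measure" where
  "mixing_law K p = density (count_space UNIV) (\<lambda>k. ennreal (if k \<in> {1..K} then p k else 0))"

definition component_law :: "(nat \<Rightarrow> real) \<Rightarrow> nat \<Rightarrow> (real \<times> nat) measure" where
  "component_law u k = distr (comp_law (u k)) latent_space (\<lambda>b. (b, k))"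

lemma component_law_measurable:
  "component_law u \<in> measurable (mixing_law K p) (subprob_algebra latent_space)"
proof -
  have "component_law u k \<in> space (subprob_algebra latent_space)" for k
  proof -
    interpret prob_space "comp_law (u k)" by (rule prob_space_comp_law)
    have "prob_space (component_law u k)" unfolding component_law_def
      by (intro prob_space_distr) (simp add: measurable_Pair1_compose)
    then show ?thesis
      by (auto simp: space_subprob_algebra component_law_def prob_space_imp_subprob_space)
  qed
  then show ?thesis by (simp add: mixing_law_def)
qed

lemma nn_integral_mixing_law:
  "(\<integral>\<^sup>+k. f k \<partial>mixing_law K p) = (\<Sum>k\<in>{1..K}. ennreal (p k) * f k)"
proof -
  have "(\<integral>\<^sup>+k. f k \<partial>mixing_law K p)
      = (\<integral>\<^sup>+k. ennreal (if k \<in> {1..K} then p k else 0) * f k \<partial>count_space UNIV)"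
    by (simp add: mixing_law_def nn_integral_density)
  also have "\<dots> = (\<Sum>k\<in>{1..K}. ennreal (p k) * f k)"
    by (subst nn_integral_count_space'[where A="{1..K}"]) (auto intro!: sum.cong)
  finally show ?thesis .
qed

lemma emeasure_component_law:
  "A \<in> sets latent_space \<Longrightarrow> emeasure (component_law u k) A = emeasure (comp_law (u k)) {b. (b, k) \<in> A}"
  unfolding component_law_def
  by (subst emeasure_distr) (auto simp: measurable_Pair1_compose vimage_def)

lemma prior_eq_bind: "prior K p u = mixing_law K p \<bind> component_law u"
proof -
  let ?M = "mixing_law K p \<bind> component_law u"
  have ne: "space (mixing_law K p) \<noteq> {}" by (simp add: mixing_law_def)
  have sets: "sets ?M = sets latent_space"
    by (rule sets_bind) (auto simp: component_law_def ne)
  have "?M = measure_of (space latent_space) (sets latent_space) (emeasure ?M)"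
    using measure_of_of_measure[of ?M] sets sets_eq_imp_space_eq[OF sets] by simp
  also have "\<dots> = prior K p u"
    unfolding prior_def
  proof (rule measure_of_eq)
    show "sets latent_space \<subseteq> Pow (space latent_space)" by (rule sets.space_closed)
    fix A assume "A \<in> sigma_sets (space latent_space) (sets latent_space)"
    then have A: "A \<in> sets latent_space" by (simp add: sets.sigma_sets_eq)
    show "emeasure ?M A = (\<Sum>k\<in>{1..K}. ennreal (p k) * emeasure (comp_law (u k)) {b. (b, k) \<in> A})"
      by (simp add: emeasure_bind[OF ne component_law_measurable A] nn_integral_mixing_law
          emeasure_component_law[OF A])
  qed
  finally show ?thesis by simp
qed

lemma sets_prior[simp, measurable_cong]: "sets (prior K p u) = sets latent_space"
  by (simp add: prior_def)

lemma space_prior[simp]: "space (prior K p u) = UNIV"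
  using sets_eq_imp_space_eq[OF sets_prior[of K p u]] by (simp add: space_pair_measure)

lemma nn_integral_prior:
  assumes [measurable]: "f \<in> borel_measurable latent_space"
  shows "(\<integral>\<^sup>+x. f x \<partial>prior K p u) = (\<Sum>k\<in>{1..K}. ennreal (p k) * (\<integral>\<^sup>+b. f (b, k) \<partial>comp_law (u k)))"
  unfolding prior_eq_bind nn_integral_bind[OF assms component_law_measurable] nn_integral_mixing_law
  unfolding component_law_def
  by (intro sum.cong refl arg_cong2[where f="(*)"], subst nn_integral_distr)
     (auto simp: measurable_Pair1_compose)

lemma emeasure_prior_eq_1:
  assumes p: "\<forall>k\<in>{1..K}. p k \<ge> 0" "(\<Sum>k\<in>{1..K}. p k) = 1"
    and A: "A \<in> sets latent_space" "UNIV \<times> {1..K} \<subseteq> A"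
  shows "emeasure (prior K p u) A = 1"
proof -
  have "emeasure (prior K p u) A = (\<integral>\<^sup>+x. indicator A x \<partial>prior K p u)"
    using A by simp
  also have "\<dots> = (\<Sum>k\<in>{1..K}. ennreal (p k) * (\<integral>\<^sup>+b. 1 \<partial>comp_law (u k)))"
    using A by (subst nn_integral_prior) (auto intro!: sum.cong simp: indicator_def subset_eq)
  also have "\<dots> = 1"
    using p prob_space.emeasure_space_1[OF prob_space_comp_law] by (simp, subst sum_ennreal) auto
  finally show ?thesis .
qed

lemma prob_space_prior:
  assumes "\<forall>k\<in>{1..K}. p k \<ge> 0" "(\<Sum>k\<in>{1..K}. p k) = 1"
  shows "prob_space (prior K p u)"
proof (rule prob_spaceI)
  have "UNIV \<in> sets latent_space"
    using sets.top[of latent_space] by (simp add: space_pair_measure)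
  then show "emeasure (prior K p u) (space (prior K p u)) = 1"
    using emeasure_prior_eq_1[OF assms] by simp
qed

lemma
  assumes [measurable]: "f \<in> borel_measurable latent_space"
    and p: "\<forall>k\<in>{1..K}. p k \<ge> 0"
    and f: "\<And>k. k \<in> {1..K} \<Longrightarrow> integrable (comp_law (u k)) (\<lambda>b. f (b, k))"
  shows integrable_prior: "integrable (prior K p u) f"
    and integral_prior: "(\<integral>x. f x \<partial>prior K p u) = (\<Sum>k\<in>{1..K}. p k * (\<integral>b. f (b, k) \<partial>comp_law (u k)))"
proof -
  have [measurable]: "(\<lambda>b. f (b, k)) \<in> borel_measurable borel" for k
    by (simp add: measurable_Pair1_compose)
  have fin_k: "(\<integral>\<^sup>+b. ennreal (f (b, k)) \<partial>comp_law (u k)) < \<infinity>"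
      "(\<integral>\<^sup>+b. ennreal (- f (b, k)) \<partial>comp_law (u k)) < \<infinity>" if "k \<in> {1..K}" for k
    using integrableD(2,3)[OF f[OF that]] by (auto simp: less_top)
  have fin: "(\<integral>\<^sup>+x. ennreal (h x) \<partial>prior K p u) < \<infinity>"
    and enn2real_eq: "enn2real (\<integral>\<^sup>+x. ennreal (h x) \<partial>prior K p u)
      = (\<Sum>k\<in>{1..K}. p k * enn2real (\<integral>\<^sup>+b. ennreal (h (b, k)) \<partial>comp_law (u k)))"
    if [measurable]: "h \<in> borel_measurable latent_space"
      and h: "\<And>k. k \<in> {1..K} \<Longrightarrow> (\<integral>\<^sup>+b. ennreal (h (b, k)) \<partial>comp_law (u k)) < \<infinity>" for h
    unfolding nn_integral_prior[OF measurable_compose[OF that(1) measurable_ennreal]]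
    using h p by (auto simp: ennreal_mult_less_top ennreal_sum_less_top)
      (subst enn2real_sum, auto simp: ennreal_mult_less_top enn2real_mult intro!: sum.cong)
  show "integrable (prior K p u) f"
    using fin[of f] fin[of "\<lambda>x. - f x"] fin_k by (simp add: real_integrable_def less_top)
  then show "(\<integral>x. f x \<partial>prior K p u) = (\<Sum>k\<in>{1..K}. p k * (\<integral>b. f (b, k) \<partial>comp_law (u k)))"
    using enn2real_eq[of f] enn2real_eq[of "\<lambda>x. - f x"] fin_k
    by (simp add: real_lebesgue_integral_def f sum_subtractf right_diff_distrib)
qed

lemma
  assumes s: "0 < s" and u: "0 \<le> u"
  shows integrable_comp_law_normal_density: "integrable (comp_law u) (\<lambda>b. normal_density b s y)"
    and integral_comp_law_normal_density:
      "(\<integral>b. normal_density b s y \<partial>comp_law u) = normal_density 0 (sqrt (s\<^sup>2 + u\<^sup>2)) y"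
    and integrable_comp_law_mult_normal_density:
      "integrable (comp_law u) (\<lambda>b. b * normal_density b s y)"
    and integral_comp_law_mult_normal_density:
      "(\<integral>b. b * normal_density b s y \<partial>comp_law u)
         = u\<^sup>2 / (s\<^sup>2 + u\<^sup>2) * y * normal_density 0 (sqrt (s\<^sup>2 + u\<^sup>2)) y"
proof -
  have [measurable]: "(\<lambda>b. normal_density b s y) \<in> borel_measurable borel"
    by (simp add: normal_density_def)
  define \<phi> where "\<phi> = normal_density 0 (sqrt (s\<^sup>2 + u\<^sup>2)) y"
  have "integrable (comp_law u) (\<lambda>b. normal_density b s y)
    \<and> (\<integral>b. normal_density b s y \<partial>comp_law u) = \<phi>
    \<and> integrable (comp_law u) (\<lambda>b. b * normal_density b s y)
    \<and> (\<integral>b. b * normal_density b s y \<partial>comp_law u) = u\<^sup>2 / (s\<^sup>2 + u\<^sup>2) * y * \<phi>"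
  proof (cases "u = 0")
    case True
    then show ?thesis using s
      by (simp add: comp_law_def integrable_iff_bounded nn_integral_return integral_return \<phi>_def normal_density_def)
  next
    case False
    then have u: "0 < u" using u by simp
    define \<mu> where "\<mu> = u\<^sup>2 * y / (s\<^sup>2 + u\<^sup>2)"
    define \<tau> where "\<tau> = sqrt (s\<^sup>2 * u\<^sup>2 / (s\<^sup>2 + u\<^sup>2))"
    have \<tau>: "0 < \<tau>" using s u by (simp add: \<tau>_def add_pos_pos)
    have eq: "normal_density 0 u b * normal_density b s y = \<phi> * normal_density \<mu> \<tau> b" for b
      using normal_density_mult_normal_density[OF s u, of b y]
      by (simp add: \<mu>_def \<tau>_def \<phi>_def mult.commute)
    have eq_mult: "normal_density 0 u b * (b * normal_density b s y) = \<phi> * (normal_density \<mu> \<tau> b * b)" for b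
      using eq[of b] by (simp add: algebra_simps)
    have "comp_law u = density lborel (normal_density 0 u)" using False by (simp add: comp_law_def)
    then show ?thesis
      using \<tau> by (simp add: integrable_density integral_density eq eq_mult normal_density_nonneg
          integrable_normal_moment_nz_1 integral_normal_moment_nz_1 \<mu>_def)
  qed
  then show "integrable (comp_law u) (\<lambda>b. normal_density b s y)"
    "(\<integral>b. normal_density b s y \<partial>comp_law u) = normal_density 0 (sqrt (s\<^sup>2 + u\<^sup>2)) y"
    "integrable (comp_law u) (\<lambda>b. b * normal_density b s y)"
    "(\<integral>b. b * normal_density b s y \<partial>comp_law u)
       = u\<^sup>2 / (s\<^sup>2 + u\<^sup>2) * y * normal_density 0 (sqrt (s\<^sup>2 + u\<^sup>2)) y"
    by (simp_all add: \<phi>_def)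
qed

subsection \<open>Extended expectations and Kullback-Leibler divergence\<close>

lemma ereal_expect_integrable: "integrable q f \<Longrightarrow> ereal_expect q f = ereal (\<integral>x. f x \<partial>q)"
  by (elim integrableE) (simp add: ereal_expect_def)

lemma ereal_expect_cong_AE: "(AE x in q. f x = g x) \<Longrightarrow> ereal_expect q f = ereal_expect q g"
  unfolding ereal_expect_def
  by (intro arg_cong2[where f="(-)"] arg_cong[where f=enn2ereal] nn_integral_cong_AE) auto

lemma ereal_expect_not_integrable:
  assumes "f \<in> borel_measurable q" "\<not> integrable q f"
  shows ereal_expect_eq_PInf: "(\<integral>\<^sup>+x. ennreal (- f x) \<partial>q) < top \<Longrightarrow> ereal_expect q f = \<infinity>"
    and ereal_expect_eq_MInf: "(\<integral>\<^sup>+x. ennreal (f x) \<partial>q) < top \<Longrightarrow> ereal_expect q f = -\<infinity>"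
proof -
  show "ereal_expect q f = \<infinity>" if "(\<integral>\<^sup>+x. ennreal (- f x) \<partial>q) < top"
    using that assms less_top_ennreal[THEN iffD1, OF that]
    by (auto simp: ereal_expect_def real_integrable_def)
  show "ereal_expect q f = -\<infinity>" if "(\<integral>\<^sup>+x. ennreal (f x) \<partial>q) < top"
    using that assms less_top_ennreal[THEN iffD1, OF that]
    by (auto simp: ereal_expect_def real_integrable_def)
qed

lemma (in prob_space) nn_integral_bounded_above_finite:
  "(\<And>x. f x \<le> c) \<Longrightarrow> (\<integral>\<^sup>+x. ennreal (f x) \<partial>M) < top"
  using nn_integral_mono[of M "\<lambda>x. ennreal (f x)" "\<lambda>_. ennreal \<bar>c\<bar>"]
  by (force simp: emeasure_space_1 intro: ennreal_leI order.trans[OF _ abs_ge_self] le_less_trans)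

lemma (in prob_space) ereal_expect_const_minus:
  assumes [measurable]: "w \<in> borel_measurable M" and w: "\<And>x. 0 \<le> w x"
  shows "ereal_expect M (\<lambda>x. c - w x) = ereal c - enn2ereal (\<integral>\<^sup>+x. ennreal (w x) \<partial>M)"
proof (cases "integrable M w")
  case True
  then have "(\<integral>\<^sup>+x. ennreal (w x) \<partial>M) = ennreal (\<integral>x. w x \<partial>M)"
    using w by (intro nn_integral_eq_integral) auto
  then show ?thesis
    using True w by (simp add: ereal_expect_integrable prob_space integral_nonneg)
next
  case False
  then have "(\<integral>\<^sup>+x. ennreal (w x) \<partial>M) = \<infinity>"
    using w by (simp add: integrable_iff_bounded top.not_eq_extremum[symmetric])
  moreover have "\<not> integrable M (\<lambda>x. c - w x)"
  proof
    assume "integrable M (\<lambda>x. c - w x)"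
    from Bochner_Integration.integrable_diff[OF integrable_const this]
    have "integrable M (\<lambda>x. c - (c - w x))" .
    with False show False by simp
  qed
  ultimately show ?thesis
    using nn_integral_bounded_above_finite[of "\<lambda>x. c - w x" c] w by (subst ereal_expect_eq_MInf) auto
qed

lemma (in prob_space) ereal_expect_ln_normal_density:
  assumes [measurable]: "f \<in> borel_measurable M" and s: "0 < s"
  shows "ereal_expect M (\<lambda>x. ln (normal_density (f x) s y))
    = ereal (- (ln (2 * pi * s\<^sup>2) / 2)) - ereal (1 / (2 * s\<^sup>2)) * enn2ereal (\<integral>\<^sup>+x. ennreal ((y - f x)\<^sup>2) \<partial>M)"
proof -
  have "ereal_expect M (\<lambda>x. ln (normal_density (f x) s y))
      = ereal (- (ln (2 * pi * s\<^sup>2) / 2)) - enn2ereal (\<integral>\<^sup>+x. ennreal ((y - f x)\<^sup>2 / (2 * s\<^sup>2)) \<partial>M)"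
    using s by (simp add: ln_normal_density ereal_expect_const_minus)
  also have "(\<integral>\<^sup>+x. ennreal ((y - f x)\<^sup>2 / (2 * s\<^sup>2)) \<partial>M)
      = ennreal (1 / (2 * s\<^sup>2)) * (\<integral>\<^sup>+x. ennreal ((y - f x)\<^sup>2) \<partial>M)"
    by (subst nn_integral_cmult[symmetric]) (auto simp: ennreal_mult[symmetric] intro!: nn_integral_cong)
  finally show ?thesis by (simp add: times_ennreal.rep_eq)
qed

lemma (in prob_space) nn_integral_square_deviation:
  assumes int: "integrable M f" and mean: "(\<integral>x. f x \<partial>M) = m"
  shows "(\<integral>\<^sup>+x. ennreal ((y - f x)\<^sup>2) \<partial>M) = ennreal ((y - m)\<^sup>2) + (\<integral>\<^sup>+x. ennreal ((f x - m)\<^sup>2) \<partial>M)"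
proof -
  have [measurable]: "f \<in> borel_measurable M" using int by auto
  have expand: "(y - f x)\<^sup>2 = (f x - m)\<^sup>2 + (2 * (m - y) * f x - 2 * (m - y) * m) + (y - m)\<^sup>2"
    and expand': "(f x - m)\<^sup>2 = (y - f x)\<^sup>2 + (2 * (y - m) * f x - 2 * (y - m) * y) + (y - m)\<^sup>2" for x
    by (simp_all add: power2_eq_square algebra_simps)
  have int_iff: "integrable M (\<lambda>x. (y - f x)\<^sup>2) \<longleftrightarrow> integrable M (\<lambda>x. (f x - m)\<^sup>2)"
  proof
    assume "integrable M (\<lambda>x. (y - f x)\<^sup>2)"
    then show "integrable M (\<lambda>x. (f x - m)\<^sup>2)" unfolding expand' using int by auto
  next
    assume "integrable M (\<lambda>x. (f x - m)\<^sup>2)"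
    then show "integrable M (\<lambda>x. (y - f x)\<^sup>2)" unfolding expand using int by auto
  qed
  show ?thesis
  proof (cases "integrable M (\<lambda>x. (f x - m)\<^sup>2)")
    case True
    have "(\<integral>x. (y - f x)\<^sup>2 \<partial>M) = (\<integral>x. (f x - m)\<^sup>2 \<partial>M) + (y - m)\<^sup>2"
      unfolding expand using True int mean by (simp add: prob_space)
    then show ?thesis
      using True int_iff
      by (simp add: nn_integral_eq_integral ennreal_plus[symmetric] integral_nonneg add.commute
          del: ennreal_plus)
  next
    case False
    then show ?thesis
      using int_iff by (simp add: integrable_iff_bounded top.not_eq_extremum[symmetric])
  qed
qed

lemma INF_ereal_affine:
  assumes "0 < c"
  shows "(INF q\<in>A. ereal a + ereal c * G q) = ereal a + ereal c * (INF q\<in>A. G q)"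
proof -
  let ?f = "\<lambda>x. ereal a + ereal c * x"
  have "mono ?f"
    using assms by (intro monoI add_left_mono ereal_mult_left_mono) auto
  moreover have "bij ?f"
  proof (rule o_bij[where g="\<lambda>x. ereal (1 / c) * (x - ereal a)"])
    show "(\<lambda>x. ereal (1 / c) * (x - ereal a)) \<circ> ?f = id"
      using assms by (auto simp: fun_eq_iff) (case_tac x; simp)
    show "?f \<circ> (\<lambda>x. ereal (1 / c) * (x - ereal a)) = id"
      using assms by (auto simp: fun_eq_iff) (case_tac x; simp)
  qed
  ultimately show ?thesis
    using mono_bij_Inf[of ?f "G ` A"] by (simp add: image_comp)
qed

lemma ereal_le_affine_iff:
  "0 < c \<Longrightarrow> ereal x \<le> ereal a + ereal c * G \<longleftrightarrow> ereal ((x - a) / c) \<le> G"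
  by (cases G) (auto simp: field_simps)

lemma ereal_eq_affine_iff:
  "0 < c \<Longrightarrow> ereal x = ereal a + ereal c * G \<longleftrightarrow> G = ereal ((x - a) / c)"
  by (cases G) (auto simp: field_simps)

lemma ennreal_mult_minus_ln_le_1: "t * ennreal (- ln (enn2real t)) \<le> 1"
proof (cases t)
  case (real r)
  show ?thesis
  proof (cases "0 < r \<and> ln r \<le> 0")
    case True
    then have "ennreal r * ennreal (- ln r) = ennreal (r * - ln r)"
      by (subst ennreal_mult[symmetric]) auto
    then show ?thesis
      using True real mult_minus_ln_le_1[of r] by (simp add: ennreal_leI del: ennreal_neg)
  next
    case False
    then show ?thesis using real by (auto simp: ennreal_neg)
  qed
qed simp

lemma KL_negative_part_le_1:
  assumes "prob_space P" and sets_q: "sets q = sets P" and ac: "absolutely_continuous P q"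
  shows "(\<integral>\<^sup>+x. ennreal (- ln (enn2real (RN_deriv P q x))) \<partial>q) \<le> 1"
proof -
  interpret prob_space P by fact
  have "(\<integral>\<^sup>+x. ennreal (- ln (enn2real (RN_deriv P q x))) \<partial>q)
      = (\<integral>\<^sup>+x. RN_deriv P q x * ennreal (- ln (enn2real (RN_deriv P q x))) \<partial>P)"
    by (rule RN_deriv_nn_integral[OF ac sets_q]) measurable
  also have "\<dots> \<le> (\<integral>\<^sup>+x. 1 \<partial>P)"
    by (intro nn_integral_mono ennreal_mult_minus_ln_le_1)
  finally show ?thesis by (simp add: emeasure_space_1)
qed

lemma KL_not_MInf:
  assumes "prob_space P" "sets q = sets P"
  shows "KL q P \<noteq> -\<infinity>"
proof (cases "absolutely_continuous P q")
  case True
  then have "(\<integral>\<^sup>+x. ennreal (- ln (enn2real (RN_deriv P q x))) \<partial>q) < top"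
    using KL_negative_part_le_1[OF assms] by (simp add: le_less_trans)
  then obtain r where "0 \<le> r" "(\<integral>\<^sup>+x. ennreal (- ln (enn2real (RN_deriv P q x))) \<partial>q) = ennreal r"
    by (auto simp: less_top_ennreal)
  moreover have "enn2ereal a - ereal r \<noteq> -\<infinity>" for a
    using enn2ereal_nonneg[of a] by (cases "enn2ereal a") auto
  ultimately show ?thesis
    using True by (simp add: KL_def ereal_expect_def)
qed (simp add: KL_def)

subsection \<open>The Gibbs variational principle\<close>

lemma AE_RN_deriv_pos:
  assumes "prob_space P" "prob_space q" and sets_q: "sets q = sets P" and ac: "absolutely_continuous P q"
  shows "AE x in q. 0 < enn2real (RN_deriv P q x)"
proof -
  interpret P: prob_space P by fact
  interpret Q: prob_space q by fact
  have "AE x in P. RN_deriv P q x \<noteq> \<infinity>"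
    by (rule P.RN_deriv_finite[OF Q.sigma_finite_measure ac sets_q])
  then have "AE x in q. RN_deriv P q x \<noteq> \<infinity>"
    by (rule absolutely_continuous_AE[OF sets_q ac])
  moreover have "AE x in density P (RN_deriv P q). 0 < RN_deriv P q x"
    by (subst AE_density) auto
  then have "AE x in q. 0 < RN_deriv P q x"
    by (metis P.density_RN_deriv[OF ac sets_q])
  ultimately show ?thesis
    by eventually_elim (auto simp: enn2real_positive_iff top.not_eq_extremum)
qed

lemma nn_integral_divide_RN_deriv_le:
  assumes "prob_space P" and sets_q: "sets q = sets P" and ac: "absolutely_continuous P q"
    and [measurable]: "h \<in> borel_measurable P" and h: "\<And>x. 0 \<le> h x"
  shows "(\<integral>\<^sup>+x. ennreal (h x / enn2real (RN_deriv P q x)) \<partial>q) \<le> (\<integral>\<^sup>+x. ennreal (h x) \<partial>P)"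
proof -
  interpret prob_space P by fact
  have "(\<integral>\<^sup>+x. ennreal (h x / enn2real (RN_deriv P q x)) \<partial>q)
      = (\<integral>\<^sup>+x. RN_deriv P q x * ennreal (h x / enn2real (RN_deriv P q x)) \<partial>P)"
    by (rule RN_deriv_nn_integral[OF ac sets_q]) measurable
  also have "\<dots> \<le> (\<integral>\<^sup>+x. ennreal (h x) \<partial>P)"
  proof (intro nn_integral_mono)
    fix x
    show "RN_deriv P q x * ennreal (h x / enn2real (RN_deriv P q x)) \<le> ennreal (h x)"
      using h[of x] by (cases "RN_deriv P q x") (auto simp: ennreal_mult[symmetric])
  qed
  finally show ?thesis .
qed

lemma Gibbs_inequality_integrable:
  assumes P: "prob_space P" and q: "prob_space q" and sets_q: "sets q = sets P"
    and ac: "absolutely_continuous P q"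
    and [measurable]: "g \<in> borel_measurable P" and g_pos: "\<And>x. 0 < g x" and int_g: "integrable P g"
    and int_ln_g: "integrable q (\<lambda>x. ln (g x))"
    and int_ln_r: "integrable q (\<lambda>x. ln (enn2real (RN_deriv P q x)))"
  shows "(\<integral>x. ln (g x) \<partial>q) - (\<integral>x. ln (enn2real (RN_deriv P q x)) \<partial>q) \<le> ln (\<integral>x. g x \<partial>P)"
proof -
  interpret P: prob_space P by fact
  interpret Q: prob_space q by fact
  define r where "r x = enn2real (RN_deriv P q x)" for x
  define m where "m = (\<integral>x. g x \<partial>P)"
  have m: "0 < m"
    using P.integral_less_AE_space[of "\<lambda>_. 0" g] int_g g_pos by (simp add: m_def P.emeasure_space_1)
  define t where "t x = g x / m / r x" for x
  have [measurable]: "t \<in> borel_measurable q"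
    unfolding t_def r_def measurable_cong_sets[OF sets_q refl] by measurable
  have t_nonneg: "0 \<le> t x" for x
    using g_pos[of x] m by (simp add: t_def r_def less_imp_le)
  have "(\<integral>\<^sup>+x. ennreal (t x) \<partial>q) \<le> (\<integral>\<^sup>+x. ennreal (g x / m) \<partial>P)"
    unfolding t_def r_def using g_pos m
    by (intro nn_integral_divide_RN_deriv_le[OF P sets_q ac]) (auto simp: less_imp_le)
  also have "\<dots> = 1"
    using int_g g_pos m by (subst nn_integral_eq_integral) (auto simp: less_imp_le m_def)
  finally have t_le: "(\<integral>\<^sup>+x. ennreal (t x) \<partial>q) \<le> 1" .
  then have int_t: "integrable q t"
    using t_nonneg by (intro integrableI_nonneg) (auto simp: le_less_trans)
  have "(\<integral>x. t x \<partial>q) \<le> 1"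
    using t_le t_nonneg by (subst integral_eq_nn_integral) (auto simp: enn2real_leI)
  moreover have "(\<integral>x. ln (g x) - ln (r x) - ln m \<partial>q) \<le> (\<integral>x. t x - 1 \<partial>q)"
  proof (intro integral_mono_AE)
    show "AE x in q. ln (g x) - ln (r x) - ln m \<le> t x - 1"
      using AE_RN_deriv_pos[OF P q sets_q ac]
    proof eventually_elim
      case (elim x)
      then have "ln (g x) - ln (r x) - ln m = ln (t x)"
        using g_pos[of x] m by (simp add: t_def r_def ln_div ln_mult)
      also have "\<dots> \<le> t x - 1"
        using elim g_pos[of x] m by (intro ln_le_minus_one) (simp add: t_def r_def)
      finally show ?case .
    qed
  qed (use int_ln_g int_ln_r int_t in \<open>auto simp: r_def\<close>)
  ultimately show ?thesis
    using int_ln_g int_ln_r int_t by (simp add: Q.prob_space r_def m_def)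
qed

lemma Gibbs_variational_le:
  assumes P: "prob_space P" and q: "prob_space q" and sets_q: "sets q = sets P"
    and g[measurable]: "g \<in> borel_measurable P" and g_pos: "\<And>x. 0 < g x" and g_le: "\<And>x. g x \<le> c"
    and int_g: "integrable P g"
  shows "ereal_expect q (\<lambda>x. ln (g x)) - KL q P \<le> ereal (ln (\<integral>x. g x \<partial>P))"
proof -
  interpret Q: prob_space q by fact
  have [measurable]: "g \<in> borel_measurable q"
    unfolding measurable_cong_sets[OF sets_q refl] by measurable
  have ln_g_le: "ln (g x) \<le> ln c" for x
    using g_pos[of x] g_le[of x] by (intro ln_mono) auto
  show ?thesis
  proof (cases "integrable q (\<lambda>x. ln (g x))")
    case False
    then have "ereal_expect q (\<lambda>x. ln (g x)) = -\<infinity>"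
      using Q.nn_integral_bounded_above_finite[OF ln_g_le] by (intro ereal_expect_eq_MInf) auto
    then show ?thesis
      using KL_not_MInf[OF P sets_q] by (cases "KL q P") simp_all
  next
    case int_ln_g: True
    show ?thesis
    proof (cases "absolutely_continuous P q \<and> integrable q (\<lambda>x. ln (enn2real (RN_deriv P q x)))")
      case True
      then show ?thesis
        using Gibbs_inequality_integrable[OF P q sets_q _ g g_pos int_g int_ln_g]
        by (simp add: KL_def ereal_expect_integrable int_ln_g)
    next
      case False
      have "KL q P = \<infinity>"
      proof (cases "absolutely_continuous P q")
        case True
        then have "(\<integral>\<^sup>+x. ennreal (- ln (enn2real (RN_deriv P q x))) \<partial>q) < top"
          using KL_negative_part_le_1[OF P sets_q] by (simp add: le_less_trans)
        with True False show ?thesis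
          unfolding KL_def by (subst ereal_expect_eq_PInf) (auto simp: measurable_cong_sets[OF sets_q refl])
      qed (simp add: KL_def)
      then show ?thesis
        by (simp add: ereal_expect_integrable int_ln_g)
    qed
  qed
qed

definition tilted :: "'a measure \<Rightarrow> ('a \<Rightarrow> real) \<Rightarrow> 'a measure" where
  "tilted P g = density P (\<lambda>x. ennreal (g x / (\<integral>y. g y \<partial>P)))"

lemma sets_tilted[simp, measurable_cong]: "sets (tilted P g) = sets P"
  by (simp add: tilted_def)

context
  fixes P :: "'a measure" and g :: "'a \<Rightarrow> real"
  assumes P: "prob_space P" and g[measurable]: "g \<in> borel_measurable P"
    and g_pos: "\<And>x. 0 < g x" and int_g: "integrable P g"
begin

lemma integral_tilting_pos: "0 < (\<integral>x. g x \<partial>P)"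
proof -
  interpret prob_space P by (rule P)
  show ?thesis
    using integral_less_AE_space[of "\<lambda>_. 0" g] int_g g_pos by (simp add: emeasure_space_1)
qed

lemma prob_space_tilted: "prob_space (tilted P g)"
proof (rule prob_spaceI)
  have "(\<integral>\<^sup>+x. ennreal (g x / (\<integral>y. g y \<partial>P)) \<partial>P) = ennreal (\<integral>x. g x / (\<integral>y. g y \<partial>P) \<partial>P)"
    using int_g g_pos integral_tilting_pos by (intro nn_integral_eq_integral) (auto simp: less_imp_le)
  also have "\<dots> = 1" using integral_tilting_pos by simp
  finally show "emeasure (tilted P g) (space (tilted P g)) = 1"
    by (simp add: tilted_def emeasure_density)
qed

lemma
  assumes [measurable]: "f \<in> borel_measurable P" and int: "integrable P (\<lambda>x. g x * f x)"
  shows integrable_tilted: "integrable (tilted P g) f"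
    and integral_tilted: "(\<integral>x. f x \<partial>tilted P g) = (\<integral>x. g x * f x \<partial>P) / (\<integral>x. g x \<partial>P)"
proof -
  have eq: "(\<lambda>x. (g x / (\<integral>y. g y \<partial>P)) *\<^sub>R f x) = (\<lambda>x. g x * f x / (\<integral>y. g y \<partial>P))"
    by auto
  show "integrable (tilted P g) f"
    unfolding tilted_def using int g_pos integral_tilting_pos
    by (subst integrable_density) (auto simp: eq less_imp_le)
  show "(\<integral>x. f x \<partial>tilted P g) = (\<integral>x. g x * f x \<partial>P) / (\<integral>x. g x \<partial>P)"
    unfolding tilted_def using g_pos integral_tilting_pos
    by (subst integral_density) (auto simp: eq less_imp_le)
qed

lemma Gibbs_variational_eq:
  assumes int_g_ln_g: "integrable P (\<lambda>x. g x * ln (g x))"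
  shows "ereal_expect (tilted P g) (\<lambda>x. ln (g x)) - KL (tilted P g) P = ereal (ln (\<integral>x. g x \<partial>P))"
proof -
  interpret P: prob_space P by (rule P)
  interpret Q: prob_space "tilted P g" by (rule prob_space_tilted)
  define m where "m = (\<integral>x. g x \<partial>P)"
  have m: "0 < m" unfolding m_def by (rule integral_tilting_pos)
  have Q: "tilted P g = density P (\<lambda>x. ennreal (g x / m))"
    by (simp add: tilted_def m_def)
  have ac: "absolutely_continuous P (tilted P g)"
    unfolding Q by (rule absolutely_continuousI_density) simp
  have "AE x in P. ennreal (g x / m) = RN_deriv P (tilted P g) x"
    by (rule P.RN_deriv_unique) (simp_all add: Q)
  then have "AE x in tilted P g. ennreal (g x / m) = RN_deriv P (tilted P g) x"
    by (rule absolutely_continuous_AE[OF sets_tilted ac])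
  then have "AE x in tilted P g. ln (enn2real (RN_deriv P (tilted P g) x)) = ln (g x) - ln m"
  proof eventually_elim
    case (elim x)
    then have "enn2real (RN_deriv P (tilted P g) x) = g x / m"
      using elim[symmetric] g_pos[of x] m by simp
    then show ?case using g_pos[of x] m by (simp add: ln_div)
  qed
  then have "KL (tilted P g) P = ereal_expect (tilted P g) (\<lambda>x. ln (g x) - ln m)"
    using ac by (simp add: KL_def ereal_expect_cong_AE)
  moreover have int_ln_g: "integrable (tilted P g) (\<lambda>x. ln (g x))"
    by (rule integrable_tilted[OF _ int_g_ln_g]) measurable
  ultimately show ?thesis
    by (simp add: ereal_expect_integrable Q.prob_space m_def)
qed

end

subsection \<open>An envelope theorem\<close>

lemma envelope_quotient_bounds:
  fixes R S L :: "real \<Rightarrow> real"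
  assumes eq: "\<And>y. R (S y) = L y - (y - S y)\<^sup>2 / 2"
    and lower: "\<And>y y'. L y - (y - S y')\<^sup>2 / 2 \<le> R (S y')"
  shows "(S y - S z) * (z - (S y + S z) / 2) \<le> R (S y) - R (S z)"
    and "R (S y) - R (S z) \<le> (S y - S z) * (y - (S y + S z) / 2)"
  using lower[of z y] eq[of z] lower[of y z] eq[of y]
  by (simp_all add: power2_eq_square algebra_simps diff_divide_distrib) argo+

lemma envelope_has_real_derivative:
  fixes R S L :: "real \<Rightarrow> real"
  assumes mono: "strict_mono S" and cont: "\<And>y. isCont S y"
    and eq: "\<And>y. R (S y) = L y - (y - S y)\<^sup>2 / 2"
    and lower: "\<And>y y'. L y - (y - S y')\<^sup>2 / 2 \<le> R (S y')"
  shows "(R has_real_derivative (z - S z)) (at (S z))"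
proof -
  define b0 where "b0 = S z"
  have "\<exists>d>0. \<forall>b. b \<noteq> b0 \<and> \<bar>b - b0\<bar> < d \<longrightarrow> \<bar>(R b - R b0) / (b - b0) - (z - b0)\<bar> < e"
    if e: "0 < e" for e
  proof -
    define d where "d = min (min (b0 - S (z - e / 2)) (S (z + e / 2) - b0)) e"
    have "0 < d"
      using e strict_monoD[OF mono, of "z - e / 2" z] strict_monoD[OF mono, of z "z + e / 2"]
      by (simp add: d_def b0_def)
    moreover have "\<bar>(R b - R b0) / (b - b0) - (z - b0)\<bar> < e" if b: "b \<noteq> b0" "\<bar>b - b0\<bar> < d" for b
    proof -
      have "S (z - e / 2) \<le> b" "b \<le> S (z + e / 2)" using b by (auto simp: d_def abs_less_iff)
      then obtain y where y: "z - e / 2 \<le> y" "y \<le> z + e / 2" "S y = b"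
        using IVT[of S "z - e / 2" b "z + e / 2"] cont e by auto
      define \<alpha> \<beta> where "\<alpha> = z - (b + b0) / 2" and "\<beta> = y - (b + b0) / 2"
      have bounds: "(b - b0) * \<alpha> \<le> R b - R b0" "R b - R b0 \<le> (b - b0) * \<beta>"
        using envelope_quotient_bounds[of R S L y z, OF eq lower] y(3)
        by (simp_all add: \<alpha>_def \<beta>_def b0_def)
      have "min \<alpha> \<beta> \<le> (R b - R b0) / (b - b0) \<and> (R b - R b0) / (b - b0) \<le> max \<alpha> \<beta>"
      proof (cases "b0 < b")
        case True
        then show ?thesis using bounds by (simp add: field_simps min_le_iff_disj le_max_iff_disj)
      next
        case False
        then have "b < b0" using b(1) by simp
        then show ?thesis using bounds by (simp add: field_simps min_le_iff_disj le_max_iff_disj)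
      qed
      moreover have "\<bar>b - b0\<bar> < e" using b by (simp add: d_def)
      then have "\<bar>\<alpha> - (z - b0)\<bar> < e" "\<bar>\<beta> - (z - b0)\<bar> < e"
        using y(1,2) by (auto simp: \<alpha>_def \<beta>_def abs_less_iff field_simps)
      ultimately show ?thesis by (auto simp: abs_less_iff)
    qed
    ultimately show ?thesis by blast
  qed
  then have "((\<lambda>b. (R b - R b0) / (b - b0)) \<longlongrightarrow> z - b0) (at b0)"
    unfolding LIM_eq by (simp add: dist_real_def)
  then show ?thesis
    by (simp add: has_field_derivative_iff b0_def)
qed

subsection \<open>The normal scale mixture model\<close>

locale normal_scale_mixture =
  fixes K :: nat and p u :: "nat \<Rightarrow> real" and s :: real
  assumes p_nonneg: "\<forall>k\<in>{1..K}. p k \<ge> 0"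
    and p_sum: "(\<Sum>k\<in>{1..K}. p k) = 1"
    and u_nonneg: "\<forall>k\<in>{1..K}. u k \<ge> 0"
    and nondeg: "\<exists>k\<in>{1..K}. p k > 0 \<and> u k > 0"
    and s_pos: "s > 0"
begin

abbreviation "P \<equiv> prior K p u"

definition marg_var :: "nat \<Rightarrow> real" where
  "marg_var k = s\<^sup>2 + (u k)\<^sup>2"

text \<open>\<open>marg_var k\<close> is the variance of \<open>y\<close> given \<open>\<gamma> = k\<close>, so \<open>mix 0\<close> is the marginal density
  of \<open>y\<close>; the higher \<open>mix j\<close> arise in its derivatives.\<close>
definition mix :: "nat \<Rightarrow> real \<Rightarrow> real" where
  "mix j y = (\<Sum>k\<in>{1..K}. p k * normal_density 0 (sqrt (marg_var k)) y / marg_var k ^ j)"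

lemma marg_var_pos: "0 < marg_var k"
  using s_pos by (simp add: marg_var_def add_pos_nonneg)

lemma mix_0_pos: "0 < mix 0 y"
proof -
  obtain k where k: "k \<in> {1..K}" "p k > 0" using nondeg by auto
  have "0 < p k * normal_density 0 (sqrt (marg_var k)) y"
    using k marg_var_pos by (simp add: normal_density_pos)
  also have "\<dots> \<le> mix 0 y"
    unfolding mix_def power_0 div_by_1 using k p_nonneg marg_var_pos
    by (intro member_le_sum) (auto intro!: mult_nonneg_nonneg normal_density_nonneg)
  finally show ?thesis .
qed

lemma mix_has_real_derivative: "(mix j has_real_derivative (- y * mix (Suc j) y)) (at y)"
proof -
  have "((\<lambda>y. p k * normal_density 0 (sqrt (marg_var k)) y / marg_var k ^ j) has_real_derivative
      p k * (- y / marg_var k * normal_density 0 (sqrt (marg_var k)) y) / marg_var k ^ j) (at y)" for k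
    using normal_density_has_real_derivative[of "sqrt (marg_var k)" 0 y] marg_var_pos[of k]
    by (auto intro!: derivative_eq_intros)
  then have "(mix j has_real_derivative
      (\<Sum>k\<in>{1..K}. p k * (- y / marg_var k * normal_density 0 (sqrt (marg_var k)) y) / marg_var k ^ j)) (at y)"
    unfolding mix_def[abs_def] by (rule DERIV_sum)
  moreover have "(\<Sum>k\<in>{1..K}. p k * (- y / marg_var k * normal_density 0 (sqrt (marg_var k)) y) / marg_var k ^ j)
      = - y * mix (Suc j) y"
    unfolding mix_def sum_distrib_left using marg_var_pos
    by (intro sum.cong) (auto simp: field_simps)
  ultimately show ?thesis by simp
qed

lemma s2_mix_1_less: "s\<^sup>2 * mix 1 y < mix 0 y"
proof -
  define a where "a k = p k * normal_density 0 (sqrt (marg_var k)) y" for k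
  have a_nonneg: "0 \<le> a k" if "k \<in> {1..K}" for k
    using that p_nonneg by (auto simp: a_def normal_density_nonneg)
  have diff: "a k - s\<^sup>2 * (a k / marg_var k) = a k * (u k)\<^sup>2 / marg_var k" for k
  proof -
    have "a k * (u k)\<^sup>2 / marg_var k = a k * (marg_var k - s\<^sup>2) / marg_var k"
      by (simp add: marg_var_def)
    also have "\<dots> = a k - s\<^sup>2 * (a k / marg_var k)"
      using marg_var_pos[of k] by (simp add: right_diff_distrib diff_divide_distrib)
    finally show ?thesis ..
  qed
  obtain k where k: "k \<in> {1..K}" "p k > 0" "u k > 0" using nondeg by auto
  have "0 < a k * (u k)\<^sup>2 / marg_var k"
    using k marg_var_pos[of k] s_pos by (simp add: a_def normal_density_pos)
  also have "\<dots> \<le> (\<Sum>k\<in>{1..K}. a k * (u k)\<^sup>2 / marg_var k)"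
    using k a_nonneg marg_var_pos by (intro member_le_sum) (auto intro!: divide_nonneg_pos)
  also have "\<dots> = (\<Sum>k\<in>{1..K}. a k) - s\<^sup>2 * (\<Sum>k\<in>{1..K}. a k / marg_var k)"
    by (simp add: diff[symmetric] sum_subtractf sum_distrib_left)
  also have "\<dots> = mix 0 y - s\<^sup>2 * mix 1 y"
    by (simp add: mix_def a_def)
  finally show ?thesis by simp
qed

lemma mix_1_sq_le: "(mix 1 y)\<^sup>2 \<le> mix 0 y * mix 2 y"
proof -
  define a where "a k = p k * normal_density 0 (sqrt (marg_var k)) y" for k
  have a_nonneg: "0 \<le> a k" if "k \<in> {1..K}" for k
    using that p_nonneg by (auto simp: a_def normal_density_nonneg)
  have "mix 1 y = (\<Sum>k\<in>{1..K}. sqrt (a k) * (sqrt (a k) / marg_var k))"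
    unfolding mix_def using a_nonneg by (intro sum.cong) (auto simp: a_def real_sqrt_mult[symmetric])
  also have "\<dots>\<^sup>2 \<le> (\<Sum>k\<in>{1..K}. (sqrt (a k))\<^sup>2) * (\<Sum>k\<in>{1..K}. (sqrt (a k) / marg_var k)\<^sup>2)"
    by (rule Cauchy_Schwarz_ineq_sum)
  also have "\<dots> = mix 0 y * mix 2 y"
    unfolding mix_def using a_nonneg
    by (intro arg_cong2[where f="(*)"] sum.cong) (auto simp: a_def power_divide)
  finally show ?thesis .
qed

lemma likelihood_measurable[measurable]:
  "(\<lambda>x. normal_density (fst x) s y) \<in> borel_measurable latent_space"
  by (simp add: normal_density_def)

lemma integrable_likelihood: "integrable P (\<lambda>x. normal_density (fst x) s y)"
  using p_nonneg u_nonneg s_pos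
  by (intro integrable_prior) (auto intro: integrable_comp_law_normal_density)

lemma marg_NM_eq: "marg_NM K p u s y = mix 0 y"
  unfolding marg_NM_def using p_nonneg u_nonneg s_pos
  by (subst integral_prior)
     (auto intro!: sum.cong integrable_comp_law_normal_density
       simp: integral_comp_law_normal_density mix_def marg_var_def)

lemma
  shows integrable_fst_likelihood: "integrable P (\<lambda>x. fst x * normal_density (fst x) s y)"
    and integral_fst_likelihood:
      "(\<integral>x. fst x * normal_density (fst x) s y \<partial>P) = y * (mix 0 y - s\<^sup>2 * mix 1 y)"
proof -
  have [measurable]: "(\<lambda>x. fst x * normal_density (fst x) s y) \<in> borel_measurable latent_space"
    by measurable
  have shrink: "(u k)\<^sup>2 / marg_var k = 1 - s\<^sup>2 / marg_var k" for k
    using s_pos by (simp add: marg_var_def eq_diff_eq add_divide_distrib[symmetric])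
  show "integrable P (\<lambda>x. fst x * normal_density (fst x) s y)"
    using p_nonneg u_nonneg s_pos
    by (intro integrable_prior) (auto intro: integrable_comp_law_mult_normal_density)
  have "(\<integral>x. fst x * normal_density (fst x) s y \<partial>P)
      = (\<Sum>k\<in>{1..K}. p k * ((u k)\<^sup>2 / marg_var k * y * normal_density 0 (sqrt (marg_var k)) y))"
    using p_nonneg u_nonneg s_pos
    by (subst integral_prior)
       (auto intro!: sum.cong integrable_comp_law_mult_normal_density
         simp: integral_comp_law_mult_normal_density marg_var_def)
  also have "\<dots> = y * (mix 0 y - s\<^sup>2 * mix 1 y)"
    unfolding shrink mix_def
    by (simp add: sum_distrib_left sum_subtractf[symmetric] algebra_simps)
  finally show "(\<integral>x. fst x * normal_density (fst x) s y \<partial>P) = y * (mix 0 y - s\<^sup>2 * mix 1 y)" .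
qed

lemma postmean_NM_eq: "postmean_NM K p u s y = y - s\<^sup>2 * y * mix 1 y / mix 0 y"
  using mix_0_pos[of y]
  by (simp add: postmean_NM_def integral_fst_likelihood marg_NM_eq field_simps)

lemma loglik_NM_has_real_derivative:
  "(loglik_NM K p u s has_real_derivative - (y - postmean_NM K p u s y) / s\<^sup>2) (at y)"
proof -
  have "((\<lambda>y. ln (mix 0 y)) has_real_derivative (- y * mix 1 y) / mix 0 y) (at y)"
    using mix_0_pos[of y] by (auto intro!: derivative_eq_intros mix_has_real_derivative[THEN DERIV_cong])
  moreover have "loglik_NM K p u s = (\<lambda>y. ln (mix 0 y))"
    by (simp add: fun_eq_iff loglik_NM_def marg_NM_eq)
  ultimately show ?thesis
    using s_pos by (simp add: postmean_NM_eq)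
qed

lemma postmean_NM_has_pos_derivative: "\<exists>D>0. (postmean_NM K p u s has_real_derivative D) (at y)"
proof -
  define A B C where "A = mix 0 y" and "B = mix 1 y" and "C = mix 2 y"
  have A: "0 < A" by (simp add: A_def mix_0_pos)
  have "(postmean_NM K p u s has_real_derivative
      1 - s\<^sup>2 * (((B + y * (- y * C)) * A - y * B * (- y * B)) / (A * A))) (at y)"
    unfolding postmean_NM_eq[abs_def] A_def B_def C_def
    using mix_0_pos[of y]
    by (auto intro!: derivative_eq_intros mix_has_real_derivative[THEN DERIV_cong]
        simp: numeral_2_eq_2) (simp add: algebra_simps)
  moreover have "1 - s\<^sup>2 * (((B + y * (- y * C)) * A - y * B * (- y * B)) / (A * A))
      = (A - s\<^sup>2 * B) / A + s\<^sup>2 * y\<^sup>2 * (A * C - B\<^sup>2) / A\<^sup>2"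
    using A by (simp add: field_simps power2_eq_square)
  moreover have "0 < (A - s\<^sup>2 * B) / A + s\<^sup>2 * y\<^sup>2 * (A * C - B\<^sup>2) / A\<^sup>2"
    using A s2_mix_1_less[of y] mix_1_sq_le[of y]
    by (intro add_pos_nonneg divide_pos_pos divide_nonneg_pos mult_nonneg_nonneg)
       (auto simp: A_def B_def C_def)
  ultimately show ?thesis by metis
qed

lemma strict_mono_postmean_NM: "strict_mono (postmean_NM K p u s)"
  by (rule strict_monoI, rule DERIV_pos_imp_increasing) (use postmean_NM_has_pos_derivative in blast)+

lemma isCont_postmean_NM: "isCont (postmean_NM K p u s) y"
  using postmean_NM_has_pos_derivative[of y] DERIV_isCont by blast

lemma prob_space_P: "prob_space P"
  by (rule prob_space_prior[OF p_nonneg p_sum])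

definition penalty_objective :: "real \<Rightarrow> (real \<times> nat) measure \<Rightarrow> ereal" where
  "penalty_objective bbar q = ereal (s\<^sup>2 / 2 * ln (2 * pi * s\<^sup>2))
      + ereal (1/2) * enn2ereal (\<integral>\<^sup>+ x. ennreal ((fst x - bbar)\<^sup>2) \<partial>q)
      + ereal (s\<^sup>2) * KL q P"

lemma rho_NM_eq_INF: "rho_NM K p u s bbar = (INF q\<in>dists_with_mean K bbar. penalty_objective bbar q)"
  by (simp add: rho_NM_def penalty_objective_def)

lemma minus_F1_NM_eq:
  assumes "q \<in> dists_with_mean K bbar"
  shows "- F1_NM K p u s y q = ereal (1 / (2 * s\<^sup>2) * (y - bbar)\<^sup>2) + ereal (1 / s\<^sup>2) * penalty_objective bbar q"
proof -
  have q: "prob_space q" and sets_q[measurable_cong]: "sets q = sets latent_space"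
    and int: "integrable q fst" and mean: "(\<integral>x. fst x \<partial>q) = bbar"
    using assms by (auto simp: dists_with_mean_def latent_dist_def)
  interpret prob_space q by (rule q)
  define V where "V = enn2ereal (\<integral>\<^sup>+x. ennreal ((fst x - bbar)\<^sup>2) \<partial>q)"
  have V: "0 \<le> V" by (simp add: V_def)
  have KL: "KL q P \<noteq> -\<infinity>"
    by (rule KL_not_MInf[OF prob_space_P]) (simp add: sets_q)
  have "F1_NM K p u s y q = ereal (- (ln (2 * pi * s\<^sup>2) / 2))
      - ereal (1 / (2 * s\<^sup>2)) * (ereal ((y - bbar)\<^sup>2) + V) - KL q P"
    unfolding F1_NM_def V_def
    by (simp add: ereal_expect_ln_normal_density s_pos nn_integral_square_deviation[OF int mean]
        plus_ennreal.rep_eq)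
  then show ?thesis
    unfolding penalty_objective_def V_def[symmetric]
    using V KL s_pos by (cases V; cases "KL q P") (auto simp: field_simps)
qed

lemma h1_NM_eq:
  "h1_NM K p u s y bbar = ereal (1 / (2 * s\<^sup>2) * (y - bbar)\<^sup>2) + ereal (1 / s\<^sup>2) * rho_NM K p u s bbar"
proof -
  have "h1_NM K p u s y bbar = (INF q\<in>dists_with_mean K bbar. - F1_NM K p u s y q)"
    by (simp add: h1_NM_def ereal_INF_uminus_eq)
  also have "\<dots> = (INF q\<in>dists_with_mean K bbar.
      ereal (1 / (2 * s\<^sup>2) * (y - bbar)\<^sup>2) + ereal (1 / s\<^sup>2) * penalty_objective bbar q)"
    by (intro INF_cong refl minus_F1_NM_eq)
  also have "\<dots> = ereal (1 / (2 * s\<^sup>2) * (y - bbar)\<^sup>2) + ereal (1 / s\<^sup>2) * rho_NM K p u s bbar"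
    unfolding rho_NM_eq_INF using s_pos by (intro INF_ereal_affine) simp
  finally show ?thesis .
qed

abbreviation posterior :: "real \<Rightarrow> (real \<times> nat) measure" where
  "posterior y \<equiv> tilted P (\<lambda>x. normal_density (fst x) s y)"

lemma likelihood_tilt_conditions:
  "prob_space P" "(\<lambda>x. normal_density (fst x) s y) \<in> borel_measurable P"
  "\<And>x. 0 < normal_density (fst x) s y" "integrable P (\<lambda>x. normal_density (fst x) s y)"
  using prob_space_P s_pos integrable_likelihood by (auto simp: normal_density_pos)

lemma posterior_mem_dists_with_mean: "posterior y \<in> dists_with_mean K (postmean_NM K p u s y)"
proof -
  define f where "f x = ennreal (normal_density (fst x) s y / (\<integral>x. normal_density (fst x) s y \<partial>P))"
    for x :: "real \<times> nat"
  have [measurable]: "f \<in> borel_measurable latent_space"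
    unfolding f_def by measurable
  have A: "UNIV \<times> {1..K} \<in> sets latent_space"
    by (rule pair_measureI) auto
  have "emeasure (posterior y) (UNIV \<times> {1..K}) = (\<integral>\<^sup>+x. f x * indicator (UNIV \<times> {1..K}) x \<partial>P)"
    unfolding tilted_def f_def[symmetric] using A by (simp add: emeasure_density)
  also have "\<dots> = (\<integral>\<^sup>+x. f x \<partial>P)"
    using A by (subst (1 2) nn_integral_prior) (auto intro!: sum.cong nn_integral_cong simp: indicator_def)
  also have "\<dots> = emeasure (posterior y) (space (posterior y))"
    unfolding tilted_def f_def[symmetric] using sets.top[of P] by (simp add: emeasure_density)
  finally have "latent_dist K (posterior y)"
    using prob_space_tilted[OF likelihood_tilt_conditions] by (simp add: latent_dist_def prob_space.emeasure_space_1)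
  moreover have int: "integrable P (\<lambda>x. normal_density (fst x) s y * fst x)"
    using integrable_fst_likelihood by (simp add: mult.commute)
  moreover have "integrable (posterior y) fst"
    by (rule integrable_tilted[OF likelihood_tilt_conditions _ int]) simp
  moreover have "(\<integral>x. fst x \<partial>posterior y) = postmean_NM K p u s y"
    unfolding integral_tilted[OF likelihood_tilt_conditions _ int, simplified] postmean_NM_def marg_NM_def
    by (simp add: mult.commute)
  ultimately show ?thesis
    by (simp add: dists_with_mean_def)
qed

lemma F1_NM_posterior: "F1_NM K p u s y (posterior y) = ereal (loglik_NM K p u s y)"
proof -
  interpret prob_space P by (rule prob_space_P)
  define c where "c = 1 / sqrt (2 * pi * s\<^sup>2)"
  have "\<bar>normal_density (fst x) s y * ln (normal_density (fst x) s y)\<bar> \<le> c * \<bar>ln c\<bar> + 1" for x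
    using s_pos by (intro abs_mult_ln_le) (simp_all add: normal_density_pos normal_density_le c_def)
  then have "integrable P (\<lambda>x. normal_density (fst x) s y * ln (normal_density (fst x) s y))"
    by (intro integrable_const_bound[where B="c * \<bar>ln c\<bar> + 1"]) auto
  from Gibbs_variational_eq[OF likelihood_tilt_conditions this] show ?thesis
    by (simp only: F1_NM_def loglik_NM_def marg_NM_def)
qed

lemma F1_NM_le:
  assumes "latent_dist K q"
  shows "F1_NM K p u s y q \<le> ereal (loglik_NM K p u s y)"
proof -
  have "prob_space q" "sets q = sets P"
    using assms by (simp_all add: latent_dist_def)
  from Gibbs_variational_le[OF likelihood_tilt_conditions(1) this likelihood_tilt_conditions(2,3)
      normal_density_le[OF s_pos] likelihood_tilt_conditions(4)]
  show ?thesis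
    by (simp only: F1_NM_def loglik_NM_def marg_NM_def)
qed

lemma rho_NM_lower_bound:
  "ereal (- s\<^sup>2 * loglik_NM K p u s y - 1/2 * (y - bbar)\<^sup>2) \<le> rho_NM K p u s bbar"
  unfolding rho_NM_eq_INF
proof (rule INF_greatest)
  fix q assume q: "q \<in> dists_with_mean K bbar"
  then have "- ereal (loglik_NM K p u s y) \<le> - F1_NM K p u s y q"
    using F1_NM_le[of q y] by (simp only: ereal_minus_le_minus dists_with_mean_def mem_Collect_eq)
  then have "ereal (- loglik_NM K p u s y)
      \<le> ereal (1 / (2 * s\<^sup>2) * (y - bbar)\<^sup>2) + ereal (1 / s\<^sup>2) * penalty_objective bbar q"
    by (simp only: minus_F1_NM_eq[OF q] uminus_ereal.simps)
  from ereal_le_affine_iff[THEN iffD1, OF _ this] s_pos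
  have "ereal ((- loglik_NM K p u s y - 1 / (2 * s\<^sup>2) * (y - bbar)\<^sup>2) / (1 / s\<^sup>2))
      \<le> penalty_objective bbar q"
    by simp
  moreover have "(- loglik_NM K p u s y - 1 / (2 * s\<^sup>2) * (y - bbar)\<^sup>2) / (1 / s\<^sup>2)
      = - s\<^sup>2 * loglik_NM K p u s y - 1/2 * (y - bbar)\<^sup>2"
    using s_pos by (simp add: field_simps)
  ultimately show "ereal (- s\<^sup>2 * loglik_NM K p u s y - 1/2 * (y - bbar)\<^sup>2) \<le> penalty_objective bbar q"
    by simp
qed

lemma rho_NM_postmean:
  "rho_NM K p u s (postmean_NM K p u s y)
     = ereal (- s\<^sup>2 * loglik_NM K p u s y - 1/2 * (y - postmean_NM K p u s y)\<^sup>2)"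
proof (rule antisym[OF _ rho_NM_lower_bound])
  let ?S = "postmean_NM K p u s y"
  have "ereal (- loglik_NM K p u s y) = - F1_NM K p u s y (posterior y)"
    by (simp add: F1_NM_posterior)
  then have "ereal (- loglik_NM K p u s y)
      = ereal (1 / (2 * s\<^sup>2) * (y - ?S)\<^sup>2) + ereal (1 / s\<^sup>2) * penalty_objective ?S (posterior y)"
    by (simp only: minus_F1_NM_eq[OF posterior_mem_dists_with_mean])
  from ereal_eq_affine_iff[THEN iffD1, OF _ this] s_pos
  have "penalty_objective ?S (posterior y)
      = ereal ((- loglik_NM K p u s y - 1 / (2 * s\<^sup>2) * (y - ?S)\<^sup>2) / (1 / s\<^sup>2))"
    by simp
  also have "(- loglik_NM K p u s y - 1 / (2 * s\<^sup>2) * (y - ?S)\<^sup>2) / (1 / s\<^sup>2)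
      = - s\<^sup>2 * loglik_NM K p u s y - 1/2 * (y - ?S)\<^sup>2"
    using s_pos by (simp add: field_simps)
  finally have "penalty_objective ?S (posterior y)
      = ereal (- s\<^sup>2 * loglik_NM K p u s y - 1/2 * (y - ?S)\<^sup>2)" .
  moreover have "rho_NM K p u s ?S \<le> penalty_objective ?S (posterior y)"
    unfolding rho_NM_eq_INF by (rule INF_lower[OF posterior_mem_dists_with_mean])
  ultimately show "rho_NM K p u s ?S \<le> ereal (- s\<^sup>2 * loglik_NM K p u s y - 1/2 * (y - ?S)\<^sup>2)"
    by simp
qed

end

theorem mainTheorem7:
  fixes K :: nat and p u :: "nat \<Rightarrow> real" and s y :: real
  assumes K: "K \<ge> 1"
    and p_nonneg: "\<forall>k\<in>{1..K}. p k \<ge> 0"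
    and p_sum: "(\<Sum>k\<in>{1..K}. p k) = 1"
    and u_nonneg: "\<forall>k\<in>{1..K}. u k \<ge> 0"
    and nondeg: "\<exists>k\<in>{1..K}. p k > 0 \<and> u k > 0"
    and s: "s > 0"
  shows "(\<forall>bbar. h1_NM K p u s y bbar
            = ereal (1 / (2 * s\<^sup>2) * (y - bbar)\<^sup>2) + ereal (1 / s\<^sup>2) * rho_NM K p u s bbar)
       \<and> (\<forall>z. rho_NM K p u s (postmean_NM K p u s z)
               = ereal (- s\<^sup>2 * loglik_NM K p u s z - 1/2 * (z - postmean_NM K p u s z)\<^sup>2)
            \<and> ((\<lambda>b. real_of_ereal (rho_NM K p u s b)) has_real_derivative (z - postmean_NM K p u s z))
                 (at (postmean_NM K p u s z))
            \<and> (loglik_NM K p u s has_real_derivative (- (z - postmean_NM K p u s z) / s\<^sup>2)) (at z))"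
proof -
  interpret normal_scale_mixture K p u s
    using p_nonneg p_sum u_nonneg nondeg s by unfold_locales
  let ?S = "postmean_NM K p u s" and ?\<rho> = "\<lambda>b. real_of_ereal (rho_NM K p u s b)"
  have "(?\<rho> has_real_derivative (z - ?S z)) (at (?S z))" for z
  proof (rule envelope_has_real_derivative[where L="\<lambda>y. - s\<^sup>2 * loglik_NM K p u s y"])
    show "strict_mono ?S" "\<And>y. isCont ?S y"
      by (rule strict_mono_postmean_NM isCont_postmean_NM)+
    show "?\<rho> (?S y) = - s\<^sup>2 * loglik_NM K p u s y - (y - ?S y)\<^sup>2 / 2" for y
      by (simp add: rho_NM_postmean)
    show "- s\<^sup>2 * loglik_NM K p u s y - (y - ?S y')\<^sup>2 / 2 \<le> ?\<rho> (?S y')" for y y'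
      using rho_NM_lower_bound[of y "?S y'"] by (simp add: rho_NM_postmean)
  qed
  then show ?thesis
    using h1_NM_eq rho_NM_postmean loglik_NM_has_real_derivative by blast
qed

end
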